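(* Let $\alpha$ be a curve in $\mathbb{R}^3$, let $\alpha_T$ be its tangent indicatrix, and let $\beta$ be a Mannheim-direction curve of $\alpha_T$ (an $X$-direction curve of $\alpha_T$ with $N_\beta=B_T$). Then: (i) $\alpha$ is a straight line if and only if $\beta$ is a helix; (ii) $\alpha$ is a slant helix if and only if $\beta$ is a slant helix.
   Context: Let $\alpha:I\subset\mathbb{R}\to\mathbb{R}^3$ be a unit-speed curve with curvature $\kappa>0$, torsion $\tau$ and Frenet frame $\{T,N,B\}$. The Frenet frame with $N=T'/\kappa$ is used throughout. The tangent indicatrix of $\alpha$ is the curve $\alpha_T=T$ on the unit sphere. Its arc length is $s_T=\int\kappa\,ds$. Its Frenet apparatus is $\{T_T,N_T,B_T,\kappa_T,\tau_T\}$, with $\frac{dT_T}{ds_T}=\kappa_TN_T$, $\frac{dN_T}{ds_T}=-\kappa_TT_T+\tau_TB_T$ and $\frac{dB_T}{ds_T}=-\tau_TN_T$. Let $x,y,z$ be real functions of $s_T$ with $x^2+y^2+z^2=1$, and set $X=xT_T+yN_T+zB_T$. An integral curve $\beta$ of $X$, meaning $d\beta/ds_T=X$, is an $X$-direction curve of $\alpha_T$. It is regarded as a unit-speed Frenet curve with frame $\{T_\beta=X,N_\beta,B_\beta\}$, curvature $\kappa_\beta>0$ and torsion $\tau_\beta$. $\beta$ is a Mannheim-direction curve of $\alpha_T$ if $N_\beta=B_T$. A curve with curvature $k>0$ and torsion $t$ is a helix if its unit tangent makes a constant angle with a fixed line; equivalently, $t/k$ is constant. It is a slant helix if its principal normal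 makes a constant angle with a fixed line; equivalently, $\frac{k^2}{(k^2+t^2)^{3/2}}(t/k)'$ is constant, where $'$ is the derivative with respect to arc length. *)

theory Defs
  imports "HOL-Analysis.Analysis" "HOL-Analysis.Cross3"
begin

definition frenet_curve ::
  "real set \<Rightarrow> (real \<Rightarrow> real^3) \<Rightarrow> (real \<Rightarrow> real^3) \<Rightarrow> (real \<Rightarrow> real^3)
     \<Rightarrow> (real \<Rightarrow> real^3) \<Rightarrow> (real \<Rightarrow> real) \<Rightarrow> (real \<Rightarrow> real) \<Rightarrow> bool" where
  "frenet_curve J c Tc Nc Bc k t \<longleftrightarrow>
     (\<forall>s\<in>J.
        (c has_vector_derivative Tc s) (at s) \<and>
        norm (Tc s) = 1 \<and>
        k s > 0 \<and>
        (Tc has_vector_derivative (k s *\<^sub>R Nc s)) (at s) \<and>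
        norm (Nc s) = 1 \<and>
        Bc s = cross3 (Tc s) (Nc s) \<and>
        (Nc has_vector_derivative (- (k s) *\<^sub>R Tc s + t s *\<^sub>R Bc s)) (at s) \<and>
        (Bc has_vector_derivative (- (t s) *\<^sub>R Nc s)) (at s))"

definition straight_line :: "real set \<Rightarrow> (real \<Rightarrow> real^3) \<Rightarrow> bool" where
  "straight_line J c \<longleftrightarrow> (\<exists>p v. v \<noteq> 0 \<and> (\<forall>s\<in>J. \<exists>r. c s = p + r *\<^sub>R v))"

definition helix :: "real set \<Rightarrow> (real \<Rightarrow> real^3) \<Rightarrow> bool" where
  "helix J Tc \<longleftrightarrow> (\<exists>u. norm u = 1 \<and> (\<exists>a. \<forall>s\<in>J. Tc s \<bullet> u = a))"

definition slant_helix :: "real set \<Rightarrow> (real \<Rightarrow> real^3) \<Rightarrow> bool" where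
  "slant_helix J Nc \<longleftrightarrow> (\<exists>u. norm u = 1 \<and> (\<exists>a. \<forall>s\<in>J. Nc s \<bullet> u = a))"

end

(* Only the Mannheim condition N_beta = B_T is needed; the coordinates x, y, z of X play no role.
   Differentiating X . B_T = 0 gives kappa_beta = tau_T (X . N_T), so the indicatrix has
   nonvanishing torsion. For a Frenet curve, T . w is constant iff N is orthogonal to w, and
   when tau does not vanish the same holds for B . w.
   (i) Both sides are false: alpha has kappa > 0, and if X . w were constant then B_T = N_beta,
   hence N_T and finally T_T would be orthogonal to w, forcing w = 0.
   (ii) Differentiating T = alpha_T o s_T gives kappa N = kappa T_T o s_T, so alpha is a slant
   helix iff alpha_T is a helix iff its binormal B_T = N_beta makes a constant angle with an axis. *)

theory Submission
  imports Defs
begin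

lemma has_vector_derivative_inner:
  assumes "(f has_vector_derivative f') (at t)" "(g has_vector_derivative g') (at t)"
  shows "((\<lambda>t. f t \<bullet> g t) has_real_derivative f' \<bullet> g t + f t \<bullet> g') (at t)"
proof -
  have "((\<lambda>t. f t \<bullet> g t) has_derivative (\<lambda>h. f t \<bullet> (h *\<^sub>R g') + (h *\<^sub>R f') \<bullet> g t)) (at t)"
    using has_derivative_inner[OF assms[unfolded has_vector_derivative_def]] by simp
  then show ?thesis
    unfolding has_field_derivative_def by (rule has_derivative_eq_rhs) (auto simp: algebra_simps)
qed

lemma has_vector_derivative_inner_const:
  assumes "(f has_vector_derivative f') (at t)"
  shows "((\<lambda>t. f t \<bullet> w) has_real_derivative f' \<bullet> w) (at t)"
  using has_vector_derivative_inner[OF assms, of "\<lambda>_. w" 0] by simp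

lemma has_real_derivative_constant_on_open:
  assumes "open S" "s \<in> S" "(f has_real_derivative D) (at s)" "\<forall>t\<in>S. f t = c"
  shows "D = 0"
proof -
  have "((\<lambda>_. c) has_real_derivative D) (at s)"
    using has_field_derivative_transform_within_open[OF assms(3,1,2)] assms(4) by auto
  then show ?thesis
    using DERIV_const DERIV_unique by blast
qed

lemma has_vector_derivative_inner_constant_on_open:
  assumes "open S" "s \<in> S" "(f has_vector_derivative f') (at s)" "\<forall>t\<in>S. f t \<bullet> w = a"
  shows "f' \<bullet> w = 0"
  using has_real_derivative_constant_on_open[OF assms(1,2)
      has_vector_derivative_inner_const[OF assms(3)] assms(4)] .

lemma has_real_derivative_zero_constant_on_interval:
  assumes "is_interval S" "\<forall>s\<in>S. (f has_real_derivative 0) (at s)"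
  shows "\<exists>c. \<forall>s\<in>S. f s = c"
  using assms by (intro has_field_derivative_zero_constant)
    (auto simp: is_interval_convex has_field_derivative_at_within)

lemma orthonormal_cross3_zero:
  fixes a b w :: "real^3"
  assumes "norm a = 1" "norm b = 1" "a \<bullet> b = 0"
    and "a \<bullet> w = 0" "b \<bullet> w = 0" "cross3 a b \<bullet> w = 0"
  shows "w = 0"
proof -
  have norm_ab: "(norm (cross3 a b))\<^sup>2 = 1"
    using norm_cross_dot[of a b] assms(1-3) by simp
  have "cross3 (cross3 a b) w = (a \<bullet> w) *\<^sub>R b - (b \<bullet> w) *\<^sub>R a"
    by (simp add: vec_eq_iff cross3_def inner_vec_def sum_3 forall_3 algebra_simps)
  then have "cross3 (cross3 a b) w = 0"
    using assms(4,5) by simp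
  then have "(norm (cross3 a b) * norm w)\<^sup>2 = 0"
    using norm_cross_dot[of "cross3 a b" w] assms(6) by simp
  then show ?thesis
    using norm_ab by (simp add: power_mult_distrib)
qed

lemma frenet_curveD:
  assumes "frenet_curve J c Tc Nc Bc k t" "s \<in> J"
  shows "(c has_vector_derivative Tc s) (at s)" "norm (Tc s) = 1" "k s > 0"
    "(Tc has_vector_derivative (k s *\<^sub>R Nc s)) (at s)" "norm (Nc s) = 1"
    "Bc s = cross3 (Tc s) (Nc s)"
    "(Nc has_vector_derivative (- (k s) *\<^sub>R Tc s + t s *\<^sub>R Bc s)) (at s)"
    "(Bc has_vector_derivative (- (t s) *\<^sub>R Nc s)) (at s)"
  using assms unfolding frenet_curve_def by blast+

lemma frenet_tangent_normal_orthogonal: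
  assumes "frenet_curve J c Tc Nc Bc k t" "open J" "s \<in> J"
  shows "Tc s \<bullet> Nc s = 0"
proof -
  note F = frenet_curveD[OF assms(1)]
  have "((\<lambda>u. Tc u \<bullet> Tc u) has_real_derivative
          (k s *\<^sub>R Nc s) \<bullet> Tc s + Tc s \<bullet> (k s *\<^sub>R Nc s)) (at s)"
    using has_vector_derivative_inner F(4)[OF assms(3)] by blast
  moreover have "\<forall>u\<in>J. Tc u \<bullet> Tc u = 1"
    using F(2) by (simp add: norm_eq_1)
  ultimately have "(k s *\<^sub>R Nc s) \<bullet> Tc s + Tc s \<bullet> (k s *\<^sub>R Nc s) = 0"
    by (rule has_real_derivative_constant_on_open[OF assms(2,3)])
  then have "k s * (Tc s \<bullet> Nc s) = 0"
    by (simp add: inner_commute)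
  then show ?thesis
    using F(3)[OF assms(3)] by simp
qed

lemma frenet_tangent_inner_constant_iff:
  assumes "frenet_curve J c Tc Nc Bc k t" "open J" "is_interval J"
  shows "(\<exists>a. \<forall>s\<in>J. Tc s \<bullet> w = a) \<longleftrightarrow> (\<forall>s\<in>J. Nc s \<bullet> w = 0)"
proof
  note F = frenet_curveD[OF assms(1)]
  show "\<forall>s\<in>J. Nc s \<bullet> w = 0" if "\<exists>a. \<forall>s\<in>J. Tc s \<bullet> w = a"
  proof
    fix s assume s: "s \<in> J"
    have "(k s *\<^sub>R Nc s) \<bullet> w = 0"
      using that has_vector_derivative_inner_constant_on_open[OF assms(2) s F(4)[OF s]] by blast
    then show "Nc s \<bullet> w = 0"
      using F(3)[OF s] by simp
  qed
  show "\<exists>a. \<forall>s\<in>J. Tc s \<bullet> w = a" if normal: "\<forall>s\<in>J. Nc s \<bullet> w = 0"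
  proof (rule has_real_derivative_zero_constant_on_interval[OF assms(3)], intro ballI)
    fix s assume s: "s \<in> J"
    show "((\<lambda>s. Tc s \<bullet> w) has_real_derivative 0) (at s)"
      using has_vector_derivative_inner_const[OF F(4)[OF s], of w] normal s by simp
  qed
qed

lemma frenet_binormal_inner_constant_iff:
  assumes "frenet_curve J c Tc Nc Bc k t" "open J" "is_interval J" "\<forall>s\<in>J. t s \<noteq> 0"
  shows "(\<exists>a. \<forall>s\<in>J. Bc s \<bullet> w = a) \<longleftrightarrow> (\<forall>s\<in>J. Nc s \<bullet> w = 0)"
proof
  note F = frenet_curveD[OF assms(1)]
  show "\<forall>s\<in>J. Nc s \<bullet> w = 0" if "\<exists>a. \<forall>s\<in>J. Bc s \<bullet> w = a"
  proof
    fix s assume s: "s \<in> J"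
    have "(- (t s) *\<^sub>R Nc s) \<bullet> w = 0"
      using that has_vector_derivative_inner_constant_on_open[OF assms(2) s F(8)[OF s]] by blast
    then show "Nc s \<bullet> w = 0"
      using assms(4) s by simp
  qed
  show "\<exists>a. \<forall>s\<in>J. Bc s \<bullet> w = a" if normal: "\<forall>s\<in>J. Nc s \<bullet> w = 0"
  proof (rule has_real_derivative_zero_constant_on_interval[OF assms(3)], intro ballI)
    fix s assume s: "s \<in> J"
    show "((\<lambda>s. Bc s \<bullet> w) has_real_derivative 0) (at s)"
      using has_vector_derivative_inner_const[OF F(8)[OF s], of w] normal s by simp
  qed
qed

lemma helix_iff_binormal_constant_angle:
  assumes "frenet_curve J c Tc Nc Bc k t" "open J" "is_interval J" "\<forall>s\<in>J. t s \<noteq> 0"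
  shows "helix J Tc \<longleftrightarrow> (\<exists>u. norm u = 1 \<and> (\<exists>a. \<forall>s\<in>J. Bc s \<bullet> u = a))"
proof -
  have "(\<exists>a. \<forall>s\<in>J. Tc s \<bullet> u = a) \<longleftrightarrow> (\<exists>a. \<forall>s\<in>J. Bc s \<bullet> u = a)" for u
    using frenet_tangent_inner_constant_iff[OF assms(1-3)]
      frenet_binormal_inner_constant_iff[OF assms] by simp
  then show ?thesis
    unfolding helix_def by simp
qed

lemma frenet_normal_binormal_orthogonal_zero:
  assumes "frenet_curve J c Tc Nc Bc k t" "open J" "J \<noteq> {}"
    and "\<forall>s\<in>J. Nc s \<bullet> w = 0" "\<forall>s\<in>J. Bc s \<bullet> w = 0"
  shows "w = 0"
proof -
  obtain s where s: "s \<in> J"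
    using assms(3) by blast
  note F = frenet_curveD[OF assms(1) s]
  have "(- (k s) *\<^sub>R Tc s + t s *\<^sub>R Bc s) \<bullet> w = 0"
    using has_vector_derivative_inner_constant_on_open[OF assms(2) s F(7) assms(4)] .
  then have "Tc s \<bullet> w = 0"
    using assms(5) s F(3) by (simp add: inner_diff_left)
  moreover have "Nc s \<bullet> w = 0" "cross3 (Tc s) (Nc s) \<bullet> w = 0"
    using assms(4,5) s unfolding F(6)[symmetric] by simp_all
  ultimately show ?thesis
    using orthonormal_cross3_zero[OF F(2,5) frenet_tangent_normal_orthogonal[OF assms(1,2) s]]
    by blast
qed

lemma frenet_curve_not_straight_line:
  assumes "frenet_curve J c Tc Nc Bc k t" "open J" "J \<noteq> {}"
  shows "\<not> straight_line J c"
proof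
  assume "straight_line J c"
  then obtain p v where line: "\<forall>u\<in>J. \<exists>r. c u = p + r *\<^sub>R v"
    unfolding straight_line_def by blast
  obtain s where s: "s \<in> J"
    using assms(3) by blast
  note F = frenet_curveD[OF assms(1)]
  have tangent_orthogonal: "Tc u \<bullet> w = 0" if "v \<bullet> w = 0" "u \<in> J" for u w
  proof -
    have "\<forall>u\<in>J. c u \<bullet> w = p \<bullet> w"
      using line that(1) by (fastforce simp: inner_add_left)
    then show ?thesis
      using has_vector_derivative_inner_constant_on_open[OF assms(2) that(2) F(1)[OF that(2)]]
      by blast
  qed
  have normal_orthogonal: "Nc s \<bullet> w = 0" if "v \<bullet> w = 0" for w
  proof -
    have "(k s *\<^sub>R Nc s) \<bullet> w = 0"
      using has_vector_derivative_inner_constant_on_open[OF assms(2) s F(4)[OF s]]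
        tangent_orthogonal[OF that] by blast
    then show ?thesis
      using F(3)[OF s] by simp
  qed
  \<comment> \<open>w is orthogonal to v, and Tc s \<bullet> w = - (Nc s \<bullet> v)\<close>
  define w where "w = (Tc s \<bullet> v) *\<^sub>R Nc s - (Nc s \<bullet> v) *\<^sub>R Tc s"
  have "v \<bullet> w = 0"
    unfolding w_def by (simp add: inner_diff_right inner_commute)
  then have "Tc s \<bullet> w = 0"
    using tangent_orthogonal s by blast
  then have "v \<bullet> Nc s = 0"
    unfolding w_def using frenet_tangent_normal_orthogonal[OF assms(1,2) s] F(2)[OF s]
    by (simp add: inner_diff_right norm_eq_1 inner_commute)
  then have "Nc s \<bullet> Nc s = 0"
    using normal_orthogonal by blast
  then show False
    using F(5)[OF s] by (simp add: norm_eq_1)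
qed

lemma positive_derivative_image_open_interval:
  fixes f :: "real \<Rightarrow> real"
  assumes "is_interval I" "open I" "\<forall>s\<in>I. (f has_real_derivative f' s) (at s) \<and> f' s > 0"
  shows "is_interval (f ` I)" "open (f ` I)"
proof -
  have cont: "continuous_on I f"
    using assms(3) by (meson DERIV_isCont continuous_at_imp_continuous_on)
  then show "is_interval (f ` I)"
    using assms(1) by (simp add: is_interval_connected_1 connected_continuous_image)
  have "f a < f b" if "a \<in> I" "b \<in> I" "a < b" for a b
  proof (rule DERIV_pos_imp_increasing[OF \<open>a < b\<close>])
    fix s assume "a \<le> s" "s \<le> b"
    then have "s \<in> I"
      using assms(1) that(1,2) by (meson mem_is_interval_1_I)
    then show "\<exists>y. (f has_real_derivative y) (at s) \<and> y > 0"
      using assms(3) by blast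
  qed
  then have "inj_on f I"
    by (metis inj_on_def linorder_neq_iff order_less_irrefl)
  then show "open (f ` I)"
    using invariance_of_domain[OF cont assms(2)] by blast
qed

lemma tangent_indicatrix_tangent_eq_normal:
  assumes "frenet_curve I \<alpha> T N B \<kappa> \<tau>" "open I"
    and "\<forall>s\<in>I. (sT has_real_derivative \<kappa> s) (at s)" "\<forall>s\<in>I. \<alpha>T (sT s) = T s"
    and "\<forall>u\<in>sT ` I. (\<alpha>T has_vector_derivative TT u) (at u)"
  shows "\<forall>s\<in>I. N s = TT (sT s)"
proof
  fix s assume s: "s \<in> I"
  note F = frenet_curveD[OF assms(1) s]
  have "((\<alpha>T \<circ> sT) has_vector_derivative \<kappa> s *\<^sub>R TT (sT s)) (at s)"
    using vector_diff_chain_at s assms(3,5) has_real_derivative_iff_has_vector_derivative by blast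
  then have "(T has_vector_derivative \<kappa> s *\<^sub>R TT (sT s)) (at s)"
    by (rule has_vector_derivative_transform_within_open[OF _ assms(2) s]) (use assms(4) in auto)
  then have "\<kappa> s *\<^sub>R TT (sT s) = \<kappa> s *\<^sub>R N s"
    using F(4) vector_derivative_unique_at by blast
  then show "N s = TT (sT s)"
    using F(3) by simp
qed

lemma mannheim_direction_torsion_nonzero:
  assumes "frenet_curve J \<gamma> T N B \<kappa> \<tau>" "frenet_curve J \<beta> X N\<beta> B\<beta> \<kappa>\<beta> \<tau>\<beta>" "open J"
    and "\<forall>u\<in>J. N\<beta> u = B u" "u \<in> J"
  shows "\<tau> u \<noteq> 0"
proof -
  note F = frenet_curveD[OF assms(1,5)] and F\<beta> = frenet_curveD[OF assms(2,5)]
  have "\<forall>v\<in>J. X v \<bullet> B v = 0"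
    using frenet_tangent_normal_orthogonal[OF assms(2,3)] assms(4) by simp
  then have "(\<kappa>\<beta> u *\<^sub>R N\<beta> u) \<bullet> B u + X u \<bullet> (- \<tau> u *\<^sub>R N u) = 0"
    using has_real_derivative_constant_on_open[OF assms(3,5)
        has_vector_derivative_inner[OF F\<beta>(4) F(8)]] by blast
  then have "\<kappa>\<beta> u = \<tau> u * (X u \<bullet> N u)"
    using F\<beta>(5) assms(4,5) by (simp add: norm_eq_1)
  then show ?thesis
    using F\<beta>(3) by auto
qed

lemma mannheim_direction_not_helix:
  assumes "frenet_curve J \<gamma> T N B \<kappa> \<tau>" "frenet_curve J \<beta> X N\<beta> B\<beta> \<kappa>\<beta> \<tau>\<beta>"
    and "open J" "is_interval J" "J \<noteq> {}" "\<forall>u\<in>J. N\<beta> u = B u"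
  shows "\<not> helix J X"
proof
  assume "helix J X"
  then obtain w where w: "norm w = 1" "\<exists>a. \<forall>u\<in>J. X u \<bullet> w = a"
    unfolding helix_def by blast
  then have "\<forall>u\<in>J. N\<beta> u \<bullet> w = 0"
    using frenet_tangent_inner_constant_iff[OF assms(2-4)] by blast
  then have binormal: "\<forall>u\<in>J. B u \<bullet> w = 0"
    using assms(6) by simp
  moreover have "\<forall>u\<in>J. \<tau> u \<noteq> 0"
    using mannheim_direction_torsion_nonzero[OF assms(1-3,6)] by blast
  ultimately have "\<forall>u\<in>J. N u \<bullet> w = 0"
    using frenet_binormal_inner_constant_iff[OF assms(1,3,4)] by blast
  then have "w = 0"
    using frenet_normal_binormal_orthogonal_zero[OF assms(1,3,5)] binormal by blast
  then show False
    using w(1) by simp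
qed

theorem theorem6p7:
  fixes I :: "real set"
    and \<alpha> T N B :: "real \<Rightarrow> real^3" and \<kappa> \<tau> :: "real \<Rightarrow> real"
    and sT :: "real \<Rightarrow> real"
    and \<alpha>T TT NT BT :: "real \<Rightarrow> real^3" and \<kappa>T \<tau>T :: "real \<Rightarrow> real"
    and x y z :: "real \<Rightarrow> real" and X :: "real \<Rightarrow> real^3"
    and \<beta> N\<beta> B\<beta> :: "real \<Rightarrow> real^3" and \<kappa>\<beta> \<tau>\<beta> :: "real \<Rightarrow> real"
  assumes I: "is_interval I" "open I" "I \<noteq> {}"
    and alpha: "frenet_curve I \<alpha> T N B \<kappa> \<tau>"
    and arclen: "\<forall>s\<in>I. (sT has_real_derivative \<kappa> s) (at s)"
    and indicatrix: "\<forall>s\<in>I. \<alpha>T (sT s) = T s"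
    and indicatrix_frenet: "frenet_curve (sT ` I) \<alpha>T TT NT BT \<kappa>T \<tau>T"
    and xyz: "\<forall>u\<in>sT ` I. (x u)\<^sup>2 + (y u)\<^sup>2 + (z u)\<^sup>2 = 1"
    and X: "X = (\<lambda>u. x u *\<^sub>R TT u + y u *\<^sub>R NT u + z u *\<^sub>R BT u)"
    and beta: "frenet_curve (sT ` I) \<beta> X N\<beta> B\<beta> \<kappa>\<beta> \<tau>\<beta>"
    and mannheim: "\<forall>u\<in>sT ` I. N\<beta> u = BT u"
  shows "(straight_line I \<alpha> \<longleftrightarrow> helix (sT ` I) X) \<and>
         (slant_helix I N \<longleftrightarrow> slant_helix (sT ` I) N\<beta>)"
proof -
  have "\<forall>s\<in>I. (sT has_real_derivative \<kappa> s) (at s) \<and> \<kappa> s > 0"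
    using arclen frenet_curveD(3)[OF alpha] by blast
  then have J: "open (sT ` I)" "is_interval (sT ` I)" "sT ` I \<noteq> {}"
    using positive_derivative_image_open_interval[OF I(1,2)] I(3) by auto
  have "\<not> straight_line I \<alpha>"
    using frenet_curve_not_straight_line[OF alpha I(2,3)] .
  moreover have "\<not> helix (sT ` I) X"
    using mannheim_direction_not_helix[OF indicatrix_frenet beta J mannheim] .
  moreover have "slant_helix I N \<longleftrightarrow> slant_helix (sT ` I) N\<beta>"
  proof -
    have "\<forall>s\<in>I. N s = TT (sT s)"
      using tangent_indicatrix_tangent_eq_normal[OF alpha I(2) arclen indicatrix]
        frenet_curveD(1)[OF indicatrix_frenet] by blast
    then have "slant_helix I N \<longleftrightarrow> helix (sT ` I) TT"
      unfolding slant_helix_def helix_def by simp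
    also have "\<dots> \<longleftrightarrow> (\<exists>u. norm u = 1 \<and> (\<exists>a. \<forall>v\<in>sT ` I. BT v \<bullet> u = a))"
      using helix_iff_binormal_constant_angle[OF indicatrix_frenet J(1,2)]
        mannheim_direction_torsion_nonzero[OF indicatrix_frenet beta J(1) mannheim] by blast
    also have "\<dots> \<longleftrightarrow> slant_helix (sT ` I) N\<beta>"
      unfolding slant_helix_def using mannheim by simp
    finally show ?thesis .
  qed
  ultimately show ?thesis
    by blast
qed

end
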